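(* For each event $k$, let $\mathcal{P}^{\Theta}_k\subseteq\mathcal{P}$ be a set of accumulators (a "bounding box") containing $\operatorname{round}(W(\mathbf{x}_k,t_k;\boldsymbol{\theta}))$ for every $\boldsymbol{\theta}\in\Theta$. Assume the nesting property: for all $\boldsymbol{\theta}\in\Theta$ and all $1\le i<j$, if $\operatorname{round}(W(\mathbf{x}_i,t_i;\boldsymbol{\theta}))=\operatorname{round}(W(\mathbf{x}_j,t_j;\boldsymbol{\theta}))$ then $\mathcal{P}^{\Theta}_i\subseteq\mathcal{P}^{\Theta}_j$. Define recursively the upper-bound IWE $\overline{I}^n:\mathcal{P}\to\mathbb{Z}_{\ge0}$ and numbers $Q^{n}$, $\overline{L_n}$ by $\overline{I}^0\equiv 0$, $\overline{L_0}=0$, and for $n\ge 0$: $$Q^{n}=\max_{\mathbf{p}\in\mathcal{P}^{\Theta}_{n+1}}\overline{I}^{n}(\mathbf{p}),\qquad \overline{L_{n+1}}=\overline{L_n}+1+2Q^{n},$$ and $\overline{I}^{n+1}$ is obtained from $\overline{I}^{n}$ by adding $1$ at one accumulator $\boldsymbol{\nu}_{n+1}\in\mathcal{P}^{\Theta}_{n+1}$ attaining the maximum $Q^{n}$. Then for every $N\ge 0$ and every $\boldsymbol{\theta}\in\Theta$ one has $Q^{N}\ge I^{N}\big(\operatorname{round}(W(\mathbf{x}_{N+1},t_{N+1};\boldsymbol{\theta}));\boldsymbol{\theta}\big)$ (when event $N+1$ exists) and $$L^{\mathrm{SoS}}_{N}(\boldsymbol{\theta})\le\overline{L_N};\quad\text{in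 particular}\quad \max_{\boldsymbol{\theta}\in\Theta}L^{\mathrm{SoS}}_N(\boldsymbol{\theta})\le\overline{L_N}.$$
   Context: Events: a finite sequence $e_k=(\mathbf{x}_k,t_k)$, $k=1,2,\dots$, with $\mathbf{x}_k\in\mathbb{R}^2$ and timestamps $t_1\le t_2\le\cdots$. A warping function $W(\mathbf{x},t;\boldsymbol{\theta})\in\mathbb{R}^2$ depends on a parameter $\boldsymbol{\theta}$ ranging over a set $\Theta$ (the search space). The accumulators form a finite set $\mathcal{P}\subset\mathbb{Z}^2$ of lattice points; it is assumed that for every event $k$ and every $\boldsymbol\theta\in\Theta$, no coordinate of $W(\mathbf{x}_k,t_k;\boldsymbol{\theta})$ has fractional part exactly $1/2$ and the nearest lattice point $\operatorname{round}(W(\mathbf{x}_k,t_k;\boldsymbol{\theta}))$ lies in $\mathcal{P}$. The indicator $\mathbf{1}(\mathbf{p}-\mathbf{x}')$ equals $1$ if both coordinates of $\mathbf{p}-\mathbf{x}'$ have absolute value $<1/2$ and $0$ otherwise. The image of warped events (IWE) built from the first $N$ events is $I^N(\mathbf{p};\boldsymbol{\theta})=\sum_{k=1}^N\mathbf{1}(\mathbf{p}-W(\mathbf{x}_k,t_k;\boldsymbol{\theta}))$ for $\mathbf p\in\mathcal P$ (so $I^0\equiv 0$). The sum-of-squares contrast over the first $N$ events is $L^{\mathrm{SoS}}_N(\boldsymbol{\theta})=\sum_{\mathbf{p}\in\mathcal{P}}I^N(\mathbf{p};\boldsymbol{\theta})^2$. *)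

theory Defs
  imports Complex_Main
begin

text \<open>Points of the image plane are pairs of reals; accumulators are integer lattice points.\<close>

definition round_pt :: "real \<times> real \<Rightarrow> int \<times> int" where
  "round_pt w = (round (fst w), round (snd w))"

definition ind :: "int \<times> int \<Rightarrow> real \<times> real \<Rightarrow> nat" where
  "ind p w = (if \<bar>real_of_int (fst p) - fst w\<bar> < 1/2 \<and> \<bar>real_of_int (snd p) - snd w\<bar> < 1/2
              then 1 else 0)"

text \<open>Image of warped events built from the first N events (events indexed 1,2,...).\<close>
definition IWE :: "(real \<times> real \<Rightarrow> real \<Rightarrow> 'th \<Rightarrow> real \<times> real) \<Rightarrow> (nat \<Rightarrow> real \<times> real)
    \<Rightarrow> (nat \<Rightarrow> real) \<Rightarrow> nat \<Rightarrow> int \<times> int \<Rightarrow> 'th \<Rightarrow> nat" where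
  "IWE W x t N p \<theta> = (\<Sum>k=1..N. ind p (W (x k) (t k) \<theta>))"

definition LSoS :: "(real \<times> real \<Rightarrow> real \<Rightarrow> 'th \<Rightarrow> real \<times> real) \<Rightarrow> (nat \<Rightarrow> real \<times> real)
    \<Rightarrow> (nat \<Rightarrow> real) \<Rightarrow> (int \<times> int) set \<Rightarrow> nat \<Rightarrow> 'th \<Rightarrow> nat" where
  "LSoS W x t P N \<theta> = (\<Sum>p\<in>P. (IWE W x t N p \<theta>)^2)"

text \<open>Upper-bound IWE, driven by a choice sequence nu of accumulators (nu (n+1) chosen at step n+1).\<close>
fun Ibar :: "(nat \<Rightarrow> int \<times> int) \<Rightarrow> nat \<Rightarrow> int \<times> int \<Rightarrow> nat" where
  "Ibar \<nu> 0 p = 0"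
| "Ibar \<nu> (Suc n) p = Ibar \<nu> n p + (if p = \<nu> (Suc n) then 1 else 0)"

definition Qb :: "(nat \<Rightarrow> (int \<times> int) set) \<Rightarrow> (nat \<Rightarrow> int \<times> int) \<Rightarrow> nat \<Rightarrow> nat" where
  "Qb B \<nu> n = Max (Ibar \<nu> n ` B (Suc n))"

fun Lbar :: "(nat \<Rightarrow> (int \<times> int) set) \<Rightarrow> (nat \<Rightarrow> int \<times> int) \<Rightarrow> nat \<Rightarrow> nat" where
  "Lbar B \<nu> 0 = 0"
| "Lbar B \<nu> (Suc n) = Lbar B \<nu> n + 1 + 2 * Qb B \<nu> n"

end

theory Submission
  imports Defs
begin

text \<open>
  At a fixed \<open>\<theta>\<close>, the IWE after \<open>n\<close> events is the histogram of the first \<open>n\<close> rounded warped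
  positions, and the upper-bound IWE is the histogram of the greedy choices \<open>\<nu>\<close>. By induction
  on \<open>n\<close>, the true count at the accumulator of any later event \<open>j\<close> is dominated by the largest
  greedy count in its box \<open>B j\<close>. When event \<open>n + 1\<close> lands where \<open>j\<close> will, nesting gives
  \<open>B (n + 1) \<subseteq> B j\<close>, so the greedy increment at \<open>\<nu> (n + 1) \<in> B (n + 1)\<close> keeps pace with the true one.
  Adding an event at an accumulator holding \<open>I\<close> events raises the sum of squares by \<open>2 I + 1\<close>;
  with \<open>I \<le> Q\<^sup>n\<close> this is exactly the increment of \<open>\<overline>L\<close>.
\<close>

lemma abs_diff_less_half_iff_eq_round:
  fixes w :: real and p :: int
  assumes "frac w \<noteq> 1/2"
  shows "\<bar>real_of_int p - w\<bar> < 1/2 \<longleftrightarrow> p = round w"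
proof
  assume "\<bar>real_of_int p - w\<bar> < 1/2"
  then have "\<lfloor>w + 1/2\<rfloor> = p"
    by (intro floor_unique) linarith+
  then show "p = round w"
    by (simp add: round_def)
next
  assume p: "p = round w"
  have "real_of_int p \<noteq> w + 1/2"
  proof
    assume "real_of_int p = w + 1/2"
    then have "w - 1/2 = real_of_int (p - 1)"
      by simp
    then have "w - 1/2 \<in> \<int>"
      by (metis Ints_of_int)
    then have "frac w = 1/2"
      by (subst frac_unique_iff) simp
    with assms show False by simp
  qed
  with p of_int_round_le[of w] of_int_round_gt[of w]
  show "\<bar>real_of_int p - w\<bar> < 1/2"
    by linarith
qed

lemma ind_eq_round_pt:
  assumes "frac (fst w) \<noteq> 1/2" and "frac (snd w) \<noteq> 1/2"
  shows "ind p w = (if p = round_pt w then 1 else 0)"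
  using abs_diff_less_half_iff_eq_round[OF assms(1), of "fst p"]
    abs_diff_less_half_iff_eq_round[OF assms(2), of "snd p"]
  by (cases p) (simp add: ind_def round_pt_def)

lemma Max_image_mono:
  assumes "finite A" and "A \<noteq> {}" and "\<And>a. a \<in> A \<Longrightarrow> f a \<le> g a"
  shows "Max (f ` A) \<le> Max (g ` A)"
  using assms by (auto intro: order_trans[OF _ Max_ge])

lemma Max_image_le_bound:
  fixes f :: "'a \<Rightarrow> nat"
  assumes "A \<noteq> {}" and "\<And>a. a \<in> A \<Longrightarrow> f a \<le> b"
  shows "Max (f ` A) \<le> b"
proof -
  have "f ` A \<subseteq> {..b}"
    using assms(2) by auto
  then have "finite (f ` A)"
    by (rule finite_subset) simp
  with assms show ?thesis
    by simp
qed

definition hist :: "(nat \<Rightarrow> 'a) \<Rightarrow> nat \<Rightarrow> 'a \<Rightarrow> nat" where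
  "hist c n p = (\<Sum>k = 1..n. if c k = p then 1 else 0)"

lemma hist_0 [simp]: "hist c 0 p = 0"
  by (simp add: hist_def)

lemma hist_Suc: "hist c (Suc n) p = hist c n p + (if p = c (Suc n) then 1 else 0)"
  by (auto simp: hist_def sum.cl_ivl_Suc)

lemma hist_mono: "m \<le> n \<Longrightarrow> hist c m p \<le> hist c n p"
  by (induction n) (auto simp: hist_Suc le_Suc_eq)

lemma Ibar_eq_hist: "Ibar \<nu> n p = hist \<nu> n p"
  by (induction n) (auto simp: hist_Suc)

lemma IWE_eq_hist:
  assumes "\<And>k. 1 \<le> k \<Longrightarrow> k \<le> n \<Longrightarrow>
      frac (fst (W (x k) (t k) \<theta>)) \<noteq> 1/2 \<and> frac (snd (W (x k) (t k) \<theta>)) \<noteq> 1/2"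
  shows "IWE W x t n p \<theta> = hist (\<lambda>k. round_pt (W (x k) (t k) \<theta>)) n p"
  unfolding IWE_def hist_def using assms
  by (intro sum.cong refl) (auto simp: ind_eq_round_pt)

lemma sum_hist_squares_Suc:
  assumes "finite P" and "c (Suc n) \<in> P"
  shows "(\<Sum>p\<in>P. (hist c (Suc n) p)\<^sup>2) = (\<Sum>p\<in>P. (hist c n p)\<^sup>2) + 2 * hist c n (c (Suc n)) + 1"
proof -
  have "(\<Sum>p\<in>P. (hist c (Suc n) p)\<^sup>2)
      = (\<Sum>p\<in>P. (hist c n p)\<^sup>2 + (if p = c (Suc n) then 2 * hist c n p + 1 else 0))"
    by (intro sum.cong) (auto simp: hist_Suc power2_eq_square)
  also have "\<dots> = (\<Sum>p\<in>P. (hist c n p)\<^sup>2) + 2 * hist c n (c (Suc n)) + 1"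
    using assms by (simp add: sum.distrib)
  finally show ?thesis .
qed

lemma sum_hist_squares_le:
  assumes "finite P" and "\<And>k. 1 \<le> k \<Longrightarrow> k \<le> N \<Longrightarrow> c k \<in> P"
    and "\<And>n. n < N \<Longrightarrow> hist c n (c (Suc n)) \<le> Q n"
  shows "(\<Sum>p\<in>P. (hist c N p)\<^sup>2) \<le> (\<Sum>n<N. 1 + 2 * Q n)"
  using assms(2,3)
proof (induction N)
  case (Suc N)
  have "(\<Sum>p\<in>P. (hist c (Suc N) p)\<^sup>2) = (\<Sum>p\<in>P. (hist c N p)\<^sup>2) + (1 + 2 * hist c N (c (Suc N)))"
    using sum_hist_squares_Suc[OF assms(1), of c N] Suc.prems(1)[of "Suc N"] by simp
  also have "\<dots> \<le> (\<Sum>n<N. 1 + 2 * Q n) + (1 + 2 * Q N)"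
    using Suc by (intro add_mono) auto
  finally show ?case
    by simp
qed simp

lemma hist_le_Max_greedy_hist:
  assumes fin: "\<And>j. 1 \<le> j \<Longrightarrow> j \<le> M \<Longrightarrow> finite (B j)"
    and c_in: "\<And>j. 1 \<le> j \<Longrightarrow> j \<le> M \<Longrightarrow> c j \<in> B j"
    and nest: "\<And>i j. 1 \<le> i \<Longrightarrow> i < j \<Longrightarrow> j \<le> M \<Longrightarrow> c i = c j \<Longrightarrow> B i \<subseteq> B j"
    and \<nu>_in: "\<And>n. n < M \<Longrightarrow> \<nu> (Suc n) \<in> B (Suc n)"
    and \<nu>_max: "\<And>n. n < M \<Longrightarrow> Max (hist \<nu> n ` B (Suc n)) \<le> hist \<nu> n (\<nu> (Suc n))"
    and "n < j" and "j \<le> M"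
  shows "hist c n (c j) \<le> Max (hist \<nu> n ` B j)"
  using assms(6,7)
proof (induction n arbitrary: j)
  case 0
  then show ?case by simp
next
  case (Suc n)
  have fin_j: "finite (B j)" and c_j: "c j \<in> B j"
    using Suc.prems fin c_in by auto
  have greedy_le: "hist \<nu> (Suc n) q \<le> Max (hist \<nu> (Suc n) ` B j)" if "q \<in> B j" for q
    using fin_j that by simp
  show ?case
  proof (cases "c j = c (Suc n)")
    case False
    then have "hist c (Suc n) (c j) = hist c n (c j)"
      by (simp add: hist_Suc)
    also have "\<dots> \<le> Max (hist \<nu> n ` B j)"
      using Suc by simp
    also have "\<dots> \<le> Max (hist \<nu> (Suc n) ` B j)"
      using fin_j c_j by (intro Max_image_mono hist_mono) auto
    finally show ?thesis .
  next
    case True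
    then have "hist c (Suc n) (c j) = hist c n (c (Suc n)) + 1"
      by (simp add: hist_Suc)
    also have "\<dots> \<le> hist \<nu> n (\<nu> (Suc n)) + 1"
      using Suc.IH[of "Suc n"] \<nu>_max[of n] Suc.prems by simp
    also have "\<dots> = hist \<nu> (Suc n) (\<nu> (Suc n))"
      by (simp add: hist_Suc)
    also have "\<dots> \<le> Max (hist \<nu> (Suc n) ` B j)"
      using greedy_le nest[of "Suc n" j] \<nu>_in[of n] True Suc.prems by auto
    finally show ?thesis .
  qed
qed

lemma Lbar_eq_sum: "Lbar B \<nu> N = (\<Sum>n<N. 1 + 2 * Qb B \<nu> n)"
  by (induction N) simp_all

theorem theorem2:
  fixes W :: "real \<times> real \<Rightarrow> real \<Rightarrow> 'th \<Rightarrow> real \<times> real"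
    and x :: "nat \<Rightarrow> real \<times> real" and t :: "nat \<Rightarrow> real"
    and M :: nat and \<Theta> :: "'th set" and P :: "(int \<times> int) set"
    and B :: "nat \<Rightarrow> (int \<times> int) set" and \<nu> :: "nat \<Rightarrow> int \<times> int"
  assumes tmono: "\<And>i j. 1 \<le> i \<Longrightarrow> i \<le> j \<Longrightarrow> j \<le> M \<Longrightarrow> t i \<le> t j"
    and Pfin: "finite P"
    and nohalf: "\<And>k \<theta>. 1 \<le> k \<Longrightarrow> k \<le> M \<Longrightarrow> \<theta> \<in> \<Theta> \<Longrightarrow>
          frac (fst (W (x k) (t k) \<theta>)) \<noteq> 1/2 \<and> frac (snd (W (x k) (t k) \<theta>)) \<noteq> 1/2"
    and inP: "\<And>k \<theta>. 1 \<le> k \<Longrightarrow> k \<le> M \<Longrightarrow> \<theta> \<in> \<Theta> \<Longrightarrow> round_pt (W (x k) (t k) \<theta>) \<in> P"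
    and Bsub: "\<And>k. 1 \<le> k \<Longrightarrow> k \<le> M \<Longrightarrow> B k \<subseteq> P"
    and Bcont: "\<And>k \<theta>. 1 \<le> k \<Longrightarrow> k \<le> M \<Longrightarrow> \<theta> \<in> \<Theta> \<Longrightarrow> round_pt (W (x k) (t k) \<theta>) \<in> B k"
    and nest: "\<And>i j \<theta>. \<theta> \<in> \<Theta> \<Longrightarrow> 1 \<le> i \<Longrightarrow> i < j \<Longrightarrow> j \<le> M \<Longrightarrow>
          round_pt (W (x i) (t i) \<theta>) = round_pt (W (x j) (t j) \<theta>) \<Longrightarrow> B i \<subseteq> B j"
    and nu_in: "\<And>n. n < M \<Longrightarrow> \<nu> (Suc n) \<in> B (Suc n)"
    and nu_max: "\<And>n. n < M \<Longrightarrow> Ibar \<nu> n (\<nu> (Suc n)) = Qb B \<nu> n"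
  shows "\<forall>N \<le> M.
      (\<forall>\<theta>\<in>\<Theta>. (N < M \<longrightarrow>
            IWE W x t N (round_pt (W (x (Suc N)) (t (Suc N)) \<theta>)) \<theta> \<le> Qb B \<nu> N)
         \<and> LSoS W x t P N \<theta> \<le> Lbar B \<nu> N)
      \<and> (\<Theta> \<noteq> {} \<longrightarrow> Max ((\<lambda>\<theta>. LSoS W x t P N \<theta>) ` \<Theta>) \<le> Lbar B \<nu> N)"
proof -
  have bounds: "(N < M \<longrightarrow>
        IWE W x t N (round_pt (W (x (Suc N)) (t (Suc N)) \<theta>)) \<theta> \<le> Qb B \<nu> N)
      \<and> LSoS W x t P N \<theta> \<le> Lbar B \<nu> N"
    if \<theta>: "\<theta> \<in> \<Theta>" and N: "N \<le> M" for \<theta> N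
  proof -
    define c where "c k = round_pt (W (x k) (t k) \<theta>)" for k
    have IWE_c: "IWE W x t n p \<theta> = hist c n p" if "n \<le> M" for n p
      unfolding c_def using that \<theta> nohalf by (intro IWE_eq_hist) auto
    have greedy: "hist c n (c (Suc n)) \<le> Qb B \<nu> n" if "n < M" for n
      unfolding Qb_def Ibar_eq_hist
    proof (rule hist_le_Max_greedy_hist[where M = M])
      show "finite (B j)" if "1 \<le> j" "j \<le> M" for j
        using Bsub[OF that] Pfin by (rule finite_subset)
      show "Max (hist \<nu> n ` B (Suc n)) \<le> hist \<nu> n (\<nu> (Suc n))" if "n < M" for n
        using nu_max[OF that] by (simp add: Qb_def Ibar_eq_hist)
    qed (use that \<theta> Bcont nest nu_in in \<open>auto simp: c_def\<close>)
    have "LSoS W x t P N \<theta> = (\<Sum>p\<in>P. (hist c N p)\<^sup>2)"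
      using N by (simp add: LSoS_def IWE_c)
    also have "\<dots> \<le> (\<Sum>n<N. 1 + 2 * Qb B \<nu> n)"
      using N \<theta> inP greedy by (intro sum_hist_squares_le Pfin) (auto simp: c_def)
    finally show ?thesis
      using greedy N by (simp add: IWE_c Lbar_eq_sum c_def)
  qed
  then show ?thesis
    by (intro allI impI conjI ballI Max_image_le_bound) auto
qed

end
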